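(* Let $K$ be a compact Hausdorff scattered space of finite height and let $K^{(n)}$ denote its $n$-th Cantor--Bendixson derivative (with $K^{(0)}=K$). If for every $n$ the set $K^{(n+1)}$ admits an extension operator in $K^{(n)}$, then $K$ has the extension property.
   Context: $K^{(n+1)}$ is the set of non-isolated points of $K^{(n)}$; finite height means $K^{(n)}=\emptyset$ for some finite $n$. $C(K)$ is the Banach space of real-valued continuous functions on $K$ with the supremum norm. For compact $A$ and closed $F\subseteq A$, an extension operator for $F$ in $A$ is a bounded linear map $E:C(F)\to C(A)$ with $E(f)|_F=f$ for all $f\in C(F)$. A compact space has the extension property if every nonempty closed subset admits an extension operator in it. *)

theory Defs
  imports "HOL-Analysis.Analysis"
begin

definition scattered_space :: "'a topology \<Rightarrow> bool" where
  "scattered_space X \<longleftrightarrow>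
     (\<forall>S. S \<subseteq> topspace X \<and> S \<noteq> {} \<longrightarrow> (\<exists>x\<in>S. x \<notin> X derived_set_of S))"

fun cb_deriv :: "'a topology \<Rightarrow> nat \<Rightarrow> 'a set" where
  "cb_deriv X 0 = topspace X"
| "cb_deriv X (Suc n) = cb_deriv X n \<inter> (X derived_set_of (cb_deriv X n))"

definition finite_height :: "'a topology \<Rightarrow> bool" where
  "finite_height X \<longleftrightarrow> (\<exists>n. cb_deriv X n = {})"

definition Cfun :: "'a topology \<Rightarrow> 'a set \<Rightarrow> ('a \<Rightarrow> real) set" where
  "Cfun X F = {f. continuous_map (subtopology X F) euclideanreal f}"

text \<open>Functions are compared only on
  their domains; boundedness is \<open>\<parallel>E f\<parallel>\<^sub>\<infinity> \<le> M \<parallel>f\<parallel>\<^sub>\<infinity>\<close> written pointwise.\<close>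
definition extension_operator ::
  "'a topology \<Rightarrow> 'a set \<Rightarrow> 'a set \<Rightarrow> (('a \<Rightarrow> real) \<Rightarrow> ('a \<Rightarrow> real)) \<Rightarrow> bool" where
  "extension_operator X F A E \<longleftrightarrow>
     (\<forall>f\<in>Cfun X F. E f \<in> Cfun X A) \<and>
     (\<forall>f\<in>Cfun X F. \<forall>g\<in>Cfun X F. (\<forall>y\<in>F. f y = g y) \<longrightarrow> (\<forall>x\<in>A. E f x = E g x)) \<and>
     (\<forall>f\<in>Cfun X F. \<forall>g\<in>Cfun X F. \<forall>x\<in>A. E (\<lambda>y. f y + g y) x = E f x + E g x) \<and>
     (\<forall>f\<in>Cfun X F. \<forall>c::real. \<forall>x\<in>A. E (\<lambda>y. c * f y) x = c * E f x) \<and>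
     (\<exists>M\<ge>0. \<forall>f\<in>Cfun X F. \<forall>B\<ge>0. (\<forall>y\<in>F. \<bar>f y\<bar> \<le> B) \<longrightarrow> (\<forall>x\<in>A. \<bar>E f x\<bar> \<le> M * B)) \<and>
     (\<forall>f\<in>Cfun X F. \<forall>y\<in>F. E f y = f y)"

definition admits_extension_operator :: "'a topology \<Rightarrow> 'a set \<Rightarrow> 'a set \<Rightarrow> bool" where
  "admits_extension_operator X F A \<longleftrightarrow> (\<exists>E. extension_operator X F A E)"

definition extension_property :: "'a topology \<Rightarrow> bool" where
  "extension_property X \<longleftrightarrow>
     (\<forall>F. closedin X F \<and> F \<noteq> {} \<longrightarrow> admits_extension_operator X F (topspace X))"

end

theory Submission
  imports Defs
begin

text \<open>Write \<open>K n\<close> for \<open>cb_deriv X n\<close> and let \<open>F\<close> be closed; we construct extension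
  operators from \<open>F\<close> to \<open>F \<union> K n\<close> by downward induction on \<open>n\<close>, starting from the
  identity at the height \<open>N\<close>, where \<open>K N = {}\<close>. Every point of \<open>K n - K (n+1)\<close> is
  isolated in \<open>K n\<close>, so \<open>K (n+1) \<union> (K n - F)\<close> is closed. Hence a function on
  \<open>F \<union> K (n+1)\<close> extends continuously to \<open>F \<union> K n\<close> by pasting it with its image under
  the given operator \<open>C(K (n+1)) \<rightarrow> C(K n)\<close>, and this extension is linear and bounded.
  Composing with the operator from \<open>F\<close> to \<open>F \<union> K (n+1)\<close> gives the inductive step;
  at \<open>n = 0\<close> we reach \<open>F \<union> K 0 = K\<close>.\<close>

lemma Cfun_subset: "g \<in> Cfun X S \<Longrightarrow> T \<subseteq> S \<Longrightarrow> g \<in> Cfun X T"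
  unfolding Cfun_def
  by (metis continuous_map_from_subtopology mem_Collect_eq subtopology_subtopology Int_absorb1)

lemma Cfun_add: "f \<in> Cfun X S \<Longrightarrow> g \<in> Cfun X S \<Longrightarrow> (\<lambda>y. f y + g y) \<in> Cfun X S"
  unfolding Cfun_def by (simp add: continuous_map_add)

lemma Cfun_cmult: "f \<in> Cfun X S \<Longrightarrow> (\<lambda>y. c * f y) \<in> Cfun X S"
  unfolding Cfun_def by (simp add: continuous_map_real_mult_left)

lemma Cfun_cases_closedin:
  assumes S: "closedin X S" and T: "closedin X T"
    and g: "g \<in> Cfun X S" and h: "h \<in> Cfun X T"
    and agree: "\<And>x. x \<in> S \<inter> T \<Longrightarrow> g x = h x"
  shows "(\<lambda>x. if x \<in> S then g x else h x) \<in> Cfun X (S \<union> T)"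
  unfolding Cfun_def mem_Collect_eq
proof (rule pasting_lemma_closed[where I = "{True, False}" and T = "\<lambda>b. if b then S else T"
      and f = "\<lambda>b. if b then g else h"])
  fix b assume "b \<in> {True, False}"
  have "S = (S \<union> T) \<inter> S" "T = (S \<union> T) \<inter> T" by blast+
  then show "closedin (subtopology X (S \<union> T)) (if b then S else T)"
    using S T by (auto simp: closedin_subtopology)
  have "(S \<union> T) \<inter> S = S" "(S \<union> T) \<inter> T = T" by blast+
  then show "continuous_map (subtopology (subtopology X (S \<union> T)) (if b then S else T))
      euclideanreal (if b then g else h)"
    using g h by (simp add: Cfun_def subtopology_subtopology)
qed (use agree in auto)

lemma extension_operatorI:
  assumes "\<And>f. f \<in> Cfun X F \<Longrightarrow> E f \<in> Cfun X A"
    and "\<And>f g x. f \<in> Cfun X F \<Longrightarrow> g \<in> Cfun X F \<Longrightarrow> (\<And>y. y \<in> F \<Longrightarrow> f y = g y) \<Longrightarrow> x \<in> A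
      \<Longrightarrow> E f x = E g x"
    and "\<And>f g x. f \<in> Cfun X F \<Longrightarrow> g \<in> Cfun X F \<Longrightarrow> x \<in> A
      \<Longrightarrow> E (\<lambda>y. f y + g y) x = E f x + E g x"
    and "\<And>f c x. f \<in> Cfun X F \<Longrightarrow> x \<in> A \<Longrightarrow> E (\<lambda>y. c * f y) x = c * E f x"
    and "M \<ge> 0"
    and "\<And>f B x. f \<in> Cfun X F \<Longrightarrow> B \<ge> 0 \<Longrightarrow> (\<And>y. y \<in> F \<Longrightarrow> \<bar>f y\<bar> \<le> B) \<Longrightarrow> x \<in> A
      \<Longrightarrow> \<bar>E f x\<bar> \<le> M * B"
    and "\<And>f y. f \<in> Cfun X F \<Longrightarrow> y \<in> F \<Longrightarrow> E f y = f y"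
  shows "extension_operator X F A E"
  unfolding extension_operator_def
proof (intro conjI)
  show "\<forall>f\<in>Cfun X F. \<forall>g\<in>Cfun X F. (\<forall>y\<in>F. f y = g y) \<longrightarrow> (\<forall>x\<in>A. E f x = E g x)"
    using assms(2) by metis
  show "\<exists>M\<ge>0. \<forall>f\<in>Cfun X F. \<forall>B\<ge>0. (\<forall>y\<in>F. \<bar>f y\<bar> \<le> B) \<longrightarrow> (\<forall>x\<in>A. \<bar>E f x\<bar> \<le> M * B)"
    using assms(5,6) by metis
qed (use assms(1,3,4,7) in auto)

context
  fixes X F A E
  assumes E: "extension_operator X F A E"
begin

lemma extension_operator_Cfun: "f \<in> Cfun X F \<Longrightarrow> E f \<in> Cfun X A"
  using E unfolding extension_operator_def by blast

lemma extension_operator_cong: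
  "f \<in> Cfun X F \<Longrightarrow> g \<in> Cfun X F \<Longrightarrow> (\<And>y. y \<in> F \<Longrightarrow> f y = g y) \<Longrightarrow> x \<in> A \<Longrightarrow> E f x = E g x"
  using E unfolding extension_operator_def by blast

lemma extension_operator_add:
  "f \<in> Cfun X F \<Longrightarrow> g \<in> Cfun X F \<Longrightarrow> x \<in> A \<Longrightarrow> E (\<lambda>y. f y + g y) x = E f x + E g x"
  using E unfolding extension_operator_def by blast

lemma extension_operator_cmult:
  "f \<in> Cfun X F \<Longrightarrow> x \<in> A \<Longrightarrow> E (\<lambda>y. c * f y) x = c * E f x"
  using E unfolding extension_operator_def by blast

lemma extension_operator_restrict: "f \<in> Cfun X F \<Longrightarrow> y \<in> F \<Longrightarrow> E f y = f y"
  using E unfolding extension_operator_def by blast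

lemma extension_operator_bounded:
  obtains M where "M \<ge> 0"
    and "\<And>f B x. f \<in> Cfun X F \<Longrightarrow> B \<ge> 0 \<Longrightarrow> (\<And>y. y \<in> F \<Longrightarrow> \<bar>f y\<bar> \<le> B) \<Longrightarrow> x \<in> A
      \<Longrightarrow> \<bar>E f x\<bar> \<le> M * B"
proof -
  obtain M where "M \<ge> 0" and M: "\<forall>f\<in>Cfun X F. \<forall>B\<ge>0. (\<forall>y\<in>F. \<bar>f y\<bar> \<le> B)
      \<longrightarrow> (\<forall>x\<in>A. \<bar>E f x\<bar> \<le> M * B)"
    using E unfolding extension_operator_def by (elim conjE exE)
  show thesis
    by (rule that[OF \<open>M \<ge> 0\<close>]) (use M in blast)
qed

end

lemma extension_operator_id: "extension_operator X F F (\<lambda>f. f)"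
  by (rule extension_operatorI[where M = 1]) auto

lemma extension_operator_compose:
  assumes E1: "extension_operator X F1 F2 E1" and E2: "extension_operator X F2 F3 E2"
    and "F1 \<subseteq> F2"
  shows "extension_operator X F1 F3 (\<lambda>f. E2 (E1 f))"
proof -
  obtain M1 where "M1 \<ge> 0" and M1: "\<And>f B x. f \<in> Cfun X F1 \<Longrightarrow> B \<ge> 0 \<Longrightarrow>
      (\<And>y. y \<in> F1 \<Longrightarrow> \<bar>f y\<bar> \<le> B) \<Longrightarrow> x \<in> F2 \<Longrightarrow> \<bar>E1 f x\<bar> \<le> M1 * B"
    by (rule extension_operator_bounded[OF E1]) (rule that, blast+)
  obtain M2 where "M2 \<ge> 0" and M2: "\<And>f B x. f \<in> Cfun X F2 \<Longrightarrow> B \<ge> 0 \<Longrightarrow>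
      (\<And>y. y \<in> F2 \<Longrightarrow> \<bar>f y\<bar> \<le> B) \<Longrightarrow> x \<in> F3 \<Longrightarrow> \<bar>E2 f x\<bar> \<le> M2 * B"
    by (rule extension_operator_bounded[OF E2]) (rule that, blast+)
  note C1 = extension_operator_Cfun[OF E1]
  show ?thesis
  proof (rule extension_operatorI[where M = "M2 * M1"])
    fix f assume "f \<in> Cfun X F1"
    then show "E2 (E1 f) \<in> Cfun X F3" by (intro extension_operator_Cfun[OF E2] C1)
  next
    fix f g x assume f: "f \<in> Cfun X F1" and g: "g \<in> Cfun X F1"
      and fg: "\<And>y. y \<in> F1 \<Longrightarrow> f y = g y" and x: "x \<in> F3"
    show "E2 (E1 f) x = E2 (E1 g) x"
      using extension_operator_cong[OF E1 f g fg] C1[OF f] C1[OF g] x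
      by (intro extension_operator_cong[OF E2]) auto
  next
    fix f g x assume f: "f \<in> Cfun X F1" and g: "g \<in> Cfun X F1" and x: "x \<in> F3"
    have "E2 (E1 (\<lambda>y. f y + g y)) x = E2 (\<lambda>y. E1 f y + E1 g y) x"
      using extension_operator_add[OF E1 f g] C1[OF Cfun_add[OF f g]] Cfun_add[OF C1[OF f] C1[OF g]] x
      by (intro extension_operator_cong[OF E2]) auto
    also have "\<dots> = E2 (E1 f) x + E2 (E1 g) x"
      using extension_operator_add[OF E2 C1[OF f] C1[OF g] x] .
    finally show "E2 (E1 (\<lambda>y. f y + g y)) x = E2 (E1 f) x + E2 (E1 g) x" .
  next
    fix f c x assume f: "f \<in> Cfun X F1" and x: "x \<in> F3"
    have "E2 (E1 (\<lambda>y. c * f y)) x = E2 (\<lambda>y. c * E1 f y) x"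
      using extension_operator_cmult[OF E1 f] C1[OF Cfun_cmult[OF f]] Cfun_cmult[OF C1[OF f]] x
      by (intro extension_operator_cong[OF E2]) auto
    also have "\<dots> = c * E2 (E1 f) x"
      using extension_operator_cmult[OF E2 C1[OF f] x] .
    finally show "E2 (E1 (\<lambda>y. c * f y)) x = c * E2 (E1 f) x" .
  next
    show "M2 * M1 \<ge> 0" using \<open>M1 \<ge> 0\<close> \<open>M2 \<ge> 0\<close> by simp
  next
    fix f B x assume f: "f \<in> Cfun X F1" and "B \<ge> 0" and "\<And>y. y \<in> F1 \<Longrightarrow> \<bar>f y\<bar> \<le> B"
      and x: "x \<in> F3"
    then have "\<bar>E2 (E1 f) x\<bar> \<le> M2 * (M1 * B)"
      using \<open>M1 \<ge> 0\<close> by (intro M2 C1 M1) auto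
    then show "\<bar>E2 (E1 f) x\<bar> \<le> M2 * M1 * B" by (simp add: mult.assoc)
  next
    fix f y assume f: "f \<in> Cfun X F1" and "y \<in> F1"
    then show "E2 (E1 f) y = f y"
      using extension_operator_restrict[OF E1 f] extension_operator_restrict[OF E2 C1[OF f]]
        \<open>F1 \<subseteq> F2\<close> by auto
  qed
qed

lemma closedin_Un_diff_isolated:
  assumes "closedin X A" and "closedin X B" and "A \<inter> X derived_set_of A \<subseteq> B"
  shows "closedin X (B \<union> (A - F))"
proof -
  have "X derived_set_of (A - F) \<subseteq> A \<inter> X derived_set_of A"
    using assms(1) derived_set_of_mono[of "A - F" A X] by (auto simp: closedin_contains_derived_set)
  moreover have "X derived_set_of B \<subseteq> B" "B \<union> (A - F) \<subseteq> topspace X"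
    using assms(1,2) by (auto simp: closedin_contains_derived_set dest: closedin_subset)
  ultimately show ?thesis
    using assms(3) by (auto simp: closedin_contains_derived_set derived_set_of_Un)
qed

lemma extension_operator_Un_isolated:
  assumes A: "closedin X A" and B: "closedin X B" and "B \<subseteq> A"
    and isolated: "A \<inter> X derived_set_of A \<subseteq> B" and F: "closedin X F"
    and E: "extension_operator X B A E"
  shows "extension_operator X (F \<union> B) (F \<union> A) (\<lambda>g x. if x \<in> F \<union> B then g x else E g x)"
proof -
  obtain M where "M \<ge> 0" and M: "\<And>f C x. f \<in> Cfun X B \<Longrightarrow> C \<ge> 0 \<Longrightarrow>
      (\<And>y. y \<in> B \<Longrightarrow> \<bar>f y\<bar> \<le> C) \<Longrightarrow> x \<in> A \<Longrightarrow> \<bar>E f x\<bar> \<le> M * C"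
    by (rule extension_operator_bounded[OF E]) (rule that, blast+)
  have to_B: "g \<in> Cfun X B" if "g \<in> Cfun X (F \<union> B)" for g
    using that Cfun_subset by blast
  have "(\<lambda>x. if x \<in> F \<union> B then g x else E g x) \<in> Cfun X ((F \<union> B) \<union> (B \<union> (A - F)))"
    if g: "g \<in> Cfun X (F \<union> B)" for g
  proof (rule Cfun_cases_closedin)
    show "closedin X (F \<union> B)" using F B by blast
    show "closedin X (B \<union> (A - F))" using closedin_Un_diff_isolated[OF A B isolated] .
    show "E g \<in> Cfun X (B \<union> (A - F))"
      using extension_operator_Cfun[OF E to_B[OF g]] \<open>B \<subseteq> A\<close> by (auto intro: Cfun_subset)
    show "g x = E g x" if "x \<in> (F \<union> B) \<inter> (B \<union> (A - F))" for x
      using that extension_operator_restrict[OF E to_B[OF g]] by auto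
  qed (fact g)
  moreover have "(F \<union> B) \<union> (B \<union> (A - F)) = F \<union> A" using \<open>B \<subseteq> A\<close> by blast
  ultimately show ?thesis
  proof (intro extension_operatorI[where M = "max 1 M"])
    fix f g x assume f: "f \<in> Cfun X (F \<union> B)" and g: "g \<in> Cfun X (F \<union> B)"
      and fg: "\<And>y. y \<in> F \<union> B \<Longrightarrow> f y = g y" and x: "x \<in> F \<union> A"
    show "(if x \<in> F \<union> B then f x else E f x) = (if x \<in> F \<union> B then g x else E g x)"
      using extension_operator_cong[OF E to_B[OF f] to_B[OF g]] fg x by auto
  next
    fix f g x assume "f \<in> Cfun X (F \<union> B)" and "g \<in> Cfun X (F \<union> B)" and "x \<in> F \<union> A"
    then show "(if x \<in> F \<union> B then f x + g x else E (\<lambda>y. f y + g y) x) =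
        (if x \<in> F \<union> B then f x else E f x) + (if x \<in> F \<union> B then g x else E g x)"
      using extension_operator_add[OF E] to_B by auto
  next
    fix f c x assume "f \<in> Cfun X (F \<union> B)" and "x \<in> F \<union> A"
    then show "(if x \<in> F \<union> B then c * f x else E (\<lambda>y. c * f y) x) =
        c * (if x \<in> F \<union> B then f x else E f x)"
      using extension_operator_cmult[OF E] to_B by auto
  next
    fix f C x assume f: "f \<in> Cfun X (F \<union> B)" and C: "0 \<le> C"
      and bound: "\<And>y. y \<in> F \<union> B \<Longrightarrow> \<bar>f y\<bar> \<le> C" and x: "x \<in> F \<union> A"
    have "C \<le> max 1 M * C" using mult_right_mono[of 1 "max 1 M" C] C by simp
    moreover have "M * C \<le> max 1 M * C" using C by (intro mult_right_mono) auto
    moreover have "x \<in> A \<Longrightarrow> \<bar>E f x\<bar> \<le> M * C" using M to_B[OF f] C bound by blast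
    ultimately show "\<bar>if x \<in> F \<union> B then f x else E f x\<bar> \<le> max 1 M * C"
      using bound x by (auto intro: order_trans)
  qed auto
qed

lemma closedin_cb_deriv: "t1_space X \<Longrightarrow> closedin X (cb_deriv X n)"
  by (induction n) (auto intro: closedin_derived_set_of_gen)

lemma cb_deriv_antimono: "n \<le> m \<Longrightarrow> cb_deriv X m \<subseteq> cb_deriv X n"
  by (rule lift_Suc_antimono_le[of "cb_deriv X"]) auto

lemma admits_extension_operator_Un_cb_deriv:
  assumes "t1_space X" and "closedin X F" and "cb_deriv X N = {}"
    and steps: "\<And>n. admits_extension_operator X (cb_deriv X (Suc n)) (cb_deriv X n)"
    and "n \<le> N"
  shows "admits_extension_operator X F (F \<union> cb_deriv X n)"
  using \<open>n \<le> N\<close>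
proof (induction n rule: inc_induct)
  case base
  then show ?case
    using extension_operator_id[of X F] \<open>cb_deriv X N = {}\<close>
    unfolding admits_extension_operator_def by auto
next
  case (step n)
  obtain E where E: "extension_operator X (cb_deriv X (Suc n)) (cb_deriv X n) E"
    using steps[of n] unfolding admits_extension_operator_def by blast
  have "extension_operator X (F \<union> cb_deriv X (Suc n)) (F \<union> cb_deriv X n)
      (\<lambda>g x. if x \<in> F \<union> cb_deriv X (Suc n) then g x else E g x)"
    using cb_deriv_antimono[of n "Suc n" X]
    by (intro extension_operator_Un_isolated[OF closedin_cb_deriv closedin_cb_deriv _ _
          \<open>closedin X F\<close> E] \<open>t1_space X\<close>) auto
  then show ?case
    using step.IH unfolding admits_extension_operator_def
    by (blast intro: extension_operator_compose)
qed

theorem corollary3p11: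
  fixes X :: "'a topology"
  assumes "compact_space X" and "Hausdorff_space X" and "scattered_space X"
    and "finite_height X"
    and "\<forall>n. admits_extension_operator X (cb_deriv X (Suc n)) (cb_deriv X n)"
  shows "extension_property X"
  unfolding extension_property_def
proof (intro allI impI)
  fix F assume F: "closedin X F \<and> F \<noteq> {}"
  obtain N where "cb_deriv X N = {}" using \<open>finite_height X\<close> unfolding finite_height_def by blast
  then have "admits_extension_operator X F (F \<union> cb_deriv X 0)"
    using assms(5) F Hausdorff_imp_t1_space[OF \<open>Hausdorff_space X\<close>]
    by (intro admits_extension_operator_Un_cb_deriv) auto
  moreover have "F \<union> cb_deriv X 0 = topspace X" using F closedin_subset by auto
  ultimately show "admits_extension_operator X F (topspace X)" by simp
qed

end
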